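(* Let $(\mathcal A,X,\alpha)$ be a PTS of type $\diamond\in\{0,*,\omega,\infty\}$. For every $x\in X$ the defining equations of the trace determine a well-defined $\sigma$-finite pre-measure $\mathbf{tr}(x):\mathcal S_\diamond\to[0,1]$, and its unique extension to a measure on $\sigma(\mathcal S_\diamond)$ is a sub-probability measure; for $\diamond\in\{\omega,\infty\}$ it is a probability measure.
   Context: $\mathcal A$ is a finite alphabet with $\sigma$-algebra $\mathcal P(\mathcal A)$; $\mathbf 1=\{\checkmark\}$; products carry product $\sigma$-algebras and disjoint unions the disjoint-union $\sigma$-algebra. $\mathbb S(Y)$ / $\mathbb P(Y)$: sub-probability / probability measures on $\Sigma_Y$, measurable structure generated by evaluation maps $P\mapsto P(S)$. A PTS of type $\diamond$ is $(\mathcal A,X,\alpha)$ with $X$ a measurable space and $\alpha$ a measurable map $X\to\mathbb S(\mathcal A\times X)$ (type $0$), $X\to\mathbb S(\mathcal A\times X+\mathbf 1)$ (type $*$), $X\to\mathbb P(\mathcal A\times X)$ (type $\omega$), $X\to\mathbb P(\mathcal A\times X+\mathbf 1)$ (type $\infty$). $\mathbf P_a(x,S):=\alpha(x)(\{a\}\times S)$ for $S\in\Sigma_X$. Words: $\mathcal A^*,\mathcal A^\omega$ finite/infinite words, $\mathcal A^\infty=\mathcal A^*\cup\mathcal A^\omega$, $\mathcal A^0:=\emptyset$ for type $0$ (carrier), $\sqsubseteq$ prefix; $C_\omega(u)=\{v\in\mathcal A^\omega:u\sqsubseteq v\}$, $C_\infty(u)=\{v\in\mathcal A^\infty:u\sqsubseteq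 v\}$. Semirings: $\mathcal S_0=\{\emptyset\}$ on $\emptyset$, $\mathcal S_*=\{\emptyset\}\cup\{\{u\}:u\in\mathcal A^*\}$, $\mathcal S_\omega=\{\emptyset\}\cup\{C_\omega(u):u\in\mathcal A^*\}$, $\mathcal S_\infty=\{\emptyset\}\cup\{\{u\}\}_{u\in\mathcal A^*}\cup\{C_\infty(u)\}_{u\in\mathcal A^*}$. Trace equations: $\mathbf{tr}(x)(\emptyset)=0$; for $\diamond\in\{*,\infty\}$: $\mathbf{tr}(x)(\{\epsilon\})=\alpha(x)(\mathbf 1)$ and $\mathbf{tr}(x)(\{au\})=\int_{x'\in X}\mathbf{tr}(x')(\{u\})\,d\mathbf P_a(x,x')$; for $\diamond\in\{\omega,\infty\}$: $\mathbf{tr}(x)(C_\diamond(\epsilon))=1$ and $\mathbf{tr}(x)(C_\diamond(au))=\int_{x'\in X}\mathbf{tr}(x')(C_\diamond(u))\,d\mathbf P_a(x,x')$, for all $a\in\mathcal A$, $u\in\mathcal A^*$. A pre-measure on a semiring is a map into $[0,\infty]$ vanishing on $\emptyset$ and $\sigma$-additive (on countable disjoint families whose union lies in the semiring); $\sigma$-finite means some countable cover by members of finite measure exists. *)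

theory Defs
  imports "HOL-Probability.Probability" "HOL-Library.Stream"
begin

datatype ptstype = T0 | TStar | TOmega | TInf

text \<open>Disjoint union Y + 1 (with None playing the role of the terminal checkmark),
  carrying the disjoint-union sigma-algebra.\<close>
definition plus_one_space :: "'b measure \<Rightarrow> 'b option measure" where
  "plus_one_space N = measure_of (insert None (Some ` space N))
     ({Some ` S | S. S \<in> sets N} \<union> {insert None (Some ` S) | S. S \<in> sets N}) (\<lambda>_. 0)"

text \<open>Isomorphic copy of Y inside 'b option (used for types 0 and omega, no termination).\<close>
definition some_space :: "'b measure \<Rightarrow> 'b option measure" where
  "some_space N = measure_of (Some ` space N) {Some ` S | S. S \<in> sets N} (\<lambda>_. 0)"

definition pts_cod :: "ptstype \<Rightarrow> 'x measure \<Rightarrow> ('a \<times> 'x) option measure" where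
  "pts_cod t M = (if t \<in> {TStar, TInf}
      then plus_one_space (count_space UNIV \<Otimes>\<^sub>M M)
      else some_space (count_space UNIV \<Otimes>\<^sub>M M))"

definition is_pts :: "ptstype \<Rightarrow> 'x measure \<Rightarrow> ('x \<Rightarrow> ('a::finite \<times> 'x) option measure) \<Rightarrow> bool" where
  "is_pts t M \<alpha> \<longleftrightarrow> \<alpha> \<in> M \<rightarrow>\<^sub>M (if t \<in> {TOmega, TInf}
      then prob_algebra (pts_cod t M) else subprob_algebra (pts_cod t M))"

definition transP :: "'x measure \<Rightarrow> ('x \<Rightarrow> ('a \<times> 'x) option measure) \<Rightarrow> 'a \<Rightarrow> 'x \<Rightarrow> 'x measure" where
  "transP M \<alpha> a x = measure_of (space M) (sets M) (\<lambda>S. emeasure (\<alpha> x) (Some ` ({a} \<times> S)))"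

type_synonym 'a word = "'a list + 'a stream"

fun words :: "ptstype \<Rightarrow> 'a word set" where
  "words T0 = {}"
| "words TStar = range Inl"
| "words TOmega = range Inr"
| "words TInf = UNIV"

fun wprefix :: "'a list \<Rightarrow> 'a word \<Rightarrow> bool" where
  "wprefix u (Inl v) = (\<exists>w. v = u @ w)"
| "wprefix u (Inr s) = (stake (length u) s = u)"

definition cyl :: "ptstype \<Rightarrow> 'a list \<Rightarrow> 'a word set" where
  "cyl t u = {w \<in> words t. wprefix u w}"

fun pts_semiring :: "ptstype \<Rightarrow> 'a word set set" where
  "pts_semiring T0 = {{}}"
| "pts_semiring TStar = {{}} \<union> {{Inl u} | u. True}"
| "pts_semiring TOmega = {{}} \<union> range (cyl TOmega)"
| "pts_semiring TInf = {{}} \<union> {{Inl u} | u. True} \<union> range (cyl TInf)"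

definition trace_eqs :: "ptstype \<Rightarrow> 'x measure \<Rightarrow> ('x \<Rightarrow> ('a \<times> 'x) option measure)
    \<Rightarrow> ('x \<Rightarrow> 'a word set \<Rightarrow> ennreal) \<Rightarrow> bool" where
  "trace_eqs t M \<alpha> tr \<longleftrightarrow> (\<forall>x\<in>space M.
     tr x {} = 0 \<and>
     (t \<in> {TStar, TInf} \<longrightarrow>
        tr x {Inl []} = emeasure (\<alpha> x) {None} \<and>
        (\<forall>a u. tr x {Inl (a # u)} = (\<integral>\<^sup>+ x'. tr x' {Inl u} \<partial>transP M \<alpha> a x))) \<and>
     (t \<in> {TOmega, TInf} \<longrightarrow>
        tr x (cyl t []) = 1 \<and>
        (\<forall>a u. tr x (cyl t (a # u)) = (\<integral>\<^sup>+ x'. tr x' (cyl t u) \<partial>transP M \<alpha> a x))))"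

definition sigma_finite_on :: "'b set \<Rightarrow> 'b set set \<Rightarrow> ('b set \<Rightarrow> ennreal) \<Rightarrow> bool" where
  "sigma_finite_on \<Omega> S \<mu> \<longleftrightarrow>
     (\<exists>A::nat \<Rightarrow> 'b set. range A \<subseteq> S \<and> \<Union>(range A) = \<Omega> \<and> (\<forall>i. \<mu> (A i) \<noteq> \<infinity>))"

end

theory Submission
  imports Defs "HOL-Library.Sublist"
begin

text \<open>Solving the trace equations by recursion on the word yields canonical values \<open>term_prob u x\<close>
  for \<open>{u}\<close> and \<open>prefix_prob u x\<close> for the cylinder of \<open>u\<close>; every solution agrees with them, and
  they are at most 1 because each \<open>\<alpha> x\<close> is a sub-probability. For countable additivity, fix a
  level \<open>n\<close>: the cylinders of the words of length \<open>n\<close> and the terminated words shorter than \<open>n\<close>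
  are disjoint atoms, every member of the semiring is a union of atoms of any large enough level,
  and its trace is the sum of their weights, since
  \<open>prefix_prob w = \<Sum>\<^bsub>|z|=k\<^esub> prefix_prob (w z) + \<Sum>\<^bsub>|z|<k\<^esub> term_prob (w z)\<close>.
  By Konig's lemma (compactness of the space of infinite words over a finite alphabet) the pieces
  of a countable disjoint decomposition of a member of the semiring have a common level, so only
  finitely many are nonempty and additivity reduces to finite sums over atoms.
  Caratheodory's theorem yields the measure, unique by \<open>\<sigma>\<close>-finiteness; its mass is the trace of
  the whole space for types \<open>\<omega>\<close> and \<open>\<infinity>\<close>, and the supremum of \<open>\<Sum>\<^bsub>|u|<k\<^esub> term_prob u\<close> for type \<open>*\<close>.\<close>

section \<open>Finite and infinite words\<close>

lemma finite_lists_length: "finite {u::'a::finite list. length u = k}"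
  using finite_lists_length_eq[of "UNIV::'a set" k] by simp

lemma finite_lists_shorter: "finite {u::'a::finite list. length u < k}"
  by (rule finite_subset[OF _ finite_lists_length_le[of "UNIV::'a set" k]]) auto

lemma lists_length_Suc_image: "{u. length u = Suc k} = (\<lambda>(a, u). a # u) ` (UNIV \<times> {u. length u = k})"
  by (auto simp: image_def length_Suc_conv)

lemma lists_shorter_Suc_image:
  "{u. length u < Suc k} = insert [] ((\<lambda>(a, u). a # u) ` (UNIV \<times> {u. length u < k}))"
proof (rule set_eqI)
  fix u :: "'a list"
  show "u \<in> {u. length u < Suc k} \<longleftrightarrow> u \<in> insert [] ((\<lambda>(a, u). a # u) ` (UNIV \<times> {u. length u < k}))"
    by (cases u) (auto simp: image_def)
qed

lemma inj_on_Cons: "inj_on (\<lambda>(a, u). a # u) X"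
  by (auto simp: inj_on_def)

lemma sum_lists_length_Suc:
  "(\<Sum>u\<in>{u::'a::finite list. length u = Suc k}. g u) = (\<Sum>a\<in>UNIV. \<Sum>u\<in>{u. length u = k}. g (a # u))"
  unfolding lists_length_Suc_image
  by (subst sum.reindex[OF inj_on_Cons]) (simp add: sum.cartesian_product split_def)

lemma sum_lists_shorter_Suc:
  "(\<Sum>u\<in>{u::'a::finite list. length u < Suc k}. g u) = g [] + (\<Sum>a\<in>UNIV. \<Sum>u\<in>{u. length u < k}. g (a # u))"
proof -
  have "[] \<notin> (\<lambda>(a, u). a # u) ` (UNIV \<times> {u::'a list. length u < k})" by auto
  moreover have "finite ((\<lambda>(a, u). a # u) ` (UNIV \<times> {u::'a list. length u < k}))"
    by (intro finite_imageI finite_cartesian_product) (simp_all add: finite_lists_shorter)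
  ultimately show ?thesis unfolding lists_shorter_Suc_image
    by (simp add: sum.reindex[OF inj_on_Cons]) (simp add: sum.cartesian_product split_def)
qed

lemma sum_extensions:
  fixes w :: "'a list"
  assumes "finite {v::'a list. P (length v)}"
  shows "(\<Sum>v\<in>{v. P (length v)}. if prefix w v then g v else 0) = (\<Sum>z\<in>{z. P (length w + length z)}. g (w @ z))"
proof -
  have "(\<Sum>v\<in>{v. P (length v)}. if prefix w v then g v else 0) = (\<Sum>v\<in>{v \<in> {v. P (length v)}. prefix w v}. g v)"
    by (rule sum.inter_filter[symmetric, OF assms])
  also have "{v \<in> {v. P (length v)}. prefix w v} = (\<lambda>z. w @ z) ` {z. P (length w + length z)}"
    by (auto simp: prefix_def)
  also have "sum g \<dots> = (\<Sum>z\<in>{z. P (length w + length z)}. g (w @ z))"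
    by (rule sum.reindex_cong[where l="\<lambda>z. w @ z"]) (auto simp: inj_on_def)
  finally show ?thesis .
qed

lemma prefix_stakeI: "length v \<le> n \<Longrightarrow> stake (length v) s = v \<Longrightarrow> prefix v (stake n s)"
proof -
  assume "length v \<le> n" "stake (length v) s = v"
  then have "stake n s = v @ stake (n - length v) (sdrop (length v) s)"
    using stake_add[of "length v" s "n - length v"] by simp
  then show ?thesis by (simp add: prefix_def)
qed

lemma prefix_stakeD: "prefix v (stake n s) \<Longrightarrow> stake (length v) s = v"
proof -
  assume p: "prefix v (stake n s)"
  then have "length v \<le> n" using prefix_length_le by fastforce
  moreover have "take (length v) (stake n s) = v" using p by (auto simp: prefix_def)
  ultimately show ?thesis by (simp add: take_stake min_def)
qed

lemma wprefix_Nil [simp]: "wprefix [] y"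
  by (cases y) auto

lemma wprefix_shift: "wprefix v (Inr (v @- s))"
  by (simp add: stake_shift)

lemma wprefix_prefix_trans: "prefix u v \<Longrightarrow> wprefix v y \<Longrightarrow> wprefix u y"
proof (cases y)
  case (Inr s)
  assume "prefix u v" "wprefix v y"
  then show ?thesis using Inr prefix_stakeD[of u "length v" s] by simp
qed (auto simp: prefix_def)

lemma wprefix_comparable: "wprefix u y \<Longrightarrow> wprefix v y \<Longrightarrow> length u \<le> length v \<Longrightarrow> prefix u v"
proof (cases y)
  case (Inl l)
  assume "wprefix u y" "wprefix v y" "length u \<le> length v"
  then show ?thesis using Inl prefix_length_prefix[of u l v] by (auto simp: prefix_def)
next
  case (Inr s)
  assume "wprefix u y" "wprefix v y" "length u \<le> length v"
  then show ?thesis using prefix_stakeI[of u "length v" s] Inr by simp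
qed

section \<open>Cylinders and the semiring of traces\<close>

lemma cyl_Nil: "cyl t [] = words t"
  by (simp add: cyl_def)

lemma Inr_in_words: "t \<in> {TOmega, TInf} \<Longrightarrow> Inr s \<in> words t"
  by auto

lemma shift_in_cyl: "t \<in> {TOmega, TInf} \<Longrightarrow> Inr (v @- s) \<in> cyl t v"
  unfolding cyl_def using wprefix_shift by auto

lemma Inl_in_cyl: "Inl w \<in> cyl t v \<longleftrightarrow> Inl w \<in> words t \<and> prefix v w"
  by (auto simp: cyl_def prefix_def)

lemma cyl_nonempty: "t \<in> {TOmega, TInf} \<Longrightarrow> cyl t v \<noteq> {}"
  using shift_in_cyl[of t v] by auto

lemma cyl_neq_singleton: "t \<in> {TOmega, TInf} \<Longrightarrow> cyl t v \<noteq> {Inl w}"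
  using shift_in_cyl[of t v] by auto

lemma cyl_antimono: "prefix u v \<Longrightarrow> cyl t v \<subseteq> cyl t u"
  unfolding cyl_def using wprefix_prefix_trans by blast

lemma cyl_subset_iff:
  assumes "t \<in> {TOmega, TInf}" and "length u \<le> length v"
  shows "cyl t v \<subseteq> cyl t u \<longleftrightarrow> prefix u v"
proof
  assume "cyl t v \<subseteq> cyl t u"
  then have "Inr (v @- sconst undefined) \<in> cyl t u"
    using shift_in_cyl[OF assms(1)] by blast
  then have "wprefix u (Inr (v @- sconst undefined))"
    by (simp only: cyl_def mem_Collect_eq)
  then show "prefix u v" by (rule wprefix_comparable[OF _ wprefix_shift assms(2)])
qed (rule cyl_antimono)

lemma cyl_Int_cyl:
  "y \<in> cyl t u \<Longrightarrow> y \<in> cyl t v \<Longrightarrow> length u \<le> length v \<Longrightarrow> cyl t u \<inter> cyl t v = cyl t v"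
  using wprefix_comparable[of u y v] cyl_antimono[of u v t] by (auto simp: cyl_def)

lemma pts_semiring_cases:
  assumes "s \<in> pts_semiring t"
  obtains "s = {}"
    | w where "t \<in> {TStar, TInf}" "s = {Inl w}"
    | w where "t \<in> {TOmega, TInf}" "s = cyl t w"
  using assms by (cases t) auto

lemma pts_semiring_subset_words: "s \<in> pts_semiring t \<Longrightarrow> s \<subseteq> words t"
  by (cases t) (auto simp: cyl_def)

lemma pts_semiring_Int:
  assumes a: "a \<in> pts_semiring t" and b: "b \<in> pts_semiring t"
  shows "a \<inter> b \<in> pts_semiring t"
proof (cases "a \<inter> b = {}")
  case True
  then show ?thesis by (cases t) auto
next
  case False
  then obtain y where y: "y \<in> a" "y \<in> b" by auto
  have "a \<inter> b = a \<or> a \<inter> b = b"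
  proof (cases "\<exists>w. a = {Inl w} \<or> b = {Inl w}")
    case True
    then show ?thesis using y by auto
  next
    case False
    with a b y obtain u v where "a = cyl t u" "b = cyl t v"
      by (elim pts_semiring_cases) auto
    then show ?thesis using cyl_Int_cyl[of y t u v] cyl_Int_cyl[of y t v u] y
      by (cases "length u \<le> length v") (auto simp: Int_commute)
  qed
  then show ?thesis using a b by auto
qed

section \<open>Decomposition into atoms of a fixed level\<close>

text \<open>The index \<open>(w, False)\<close> stands for the cylinder of a word \<open>w\<close> of length \<open>n\<close>, the index
  \<open>(w, True)\<close> for the terminated word \<open>w\<close> of length \<open>< n\<close>.\<close>

definition atoms :: "ptstype \<Rightarrow> nat \<Rightarrow> ('a::finite list \<times> bool) set" where
  "atoms t n = (if t \<in> {TOmega, TInf} then (\<lambda>w. (w, False)) ` {w. length w = n} else {})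
         \<union> (if t \<in> {TStar, TInf} then (\<lambda>w. (w, True)) ` {w. length w < n} else {})"

definition atom :: "ptstype \<Rightarrow> 'a list \<times> bool \<Rightarrow> 'a word set" where
  "atom t z = (if snd z then {Inl (fst z)} else cyl t (fst z))"

definition at_level :: "ptstype \<Rightarrow> nat \<Rightarrow> 'a word set \<Rightarrow> bool" where
  "at_level t n s \<longleftrightarrow> s = {} \<or> (t \<in> {TStar, TInf} \<and> (\<exists>w. s = {Inl w} \<and> length w < n))
     \<or> (t \<in> {TOmega, TInf} \<and> (\<exists>w. s = cyl t w \<and> length w \<le> n))"

lemma finite_atoms: "finite (atoms t n)"
  unfolding atoms_def using finite_lists_length finite_lists_shorter by auto

lemma atomsE:
  assumes "z \<in> atoms t n"
  obtains w where "z = (w, False)" "t \<in> {TOmega, TInf}" "length w = n"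
    | w where "z = (w, True)" "t \<in> {TStar, TInf}" "length w < n"
  using assms unfolding atoms_def by (auto split: if_splits)

lemma atom_nonempty: "z \<in> atoms t n \<Longrightarrow> atom t z \<noteq> {}"
  by (erule atomsE) (auto simp: atom_def cyl_nonempty)

lemma atom_in_pts_semiring: "z \<in> atoms t n \<Longrightarrow> atom t z \<in> pts_semiring t"
  by (erule atomsE) (cases t, auto simp: atom_def)+

lemma atoms_disjoint:
  assumes z: "z \<in> atoms t n" and z': "z' \<in> atoms t n" and y: "y \<in> atom t z" "y \<in> atom t z'"
  shows "z = z'"
proof (rule atomsE[OF z]; rule atomsE[OF z'])
  fix w w' assume *: "z = (w, False)" "length w = n" "z' = (w', False)" "length w' = n"
  then have "prefix w w'" using y wprefix_comparable[of w y w'] by (auto simp: atom_def cyl_def)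
  then show ?thesis using * by (auto simp: prefix_def)
next
  fix w w' assume *: "z = (w, False)" "length w = n" "z' = (w', True)" "length w' < n"
  then have "prefix w w'" using y by (auto simp: atom_def Inl_in_cyl)
  then show ?thesis using * prefix_length_le by fastforce
next
  fix w w' assume *: "z = (w, True)" "length w < n" "z' = (w', False)" "length w' = n"
  then have "prefix w' w" using y by (auto simp: atom_def Inl_in_cyl)
  then show ?thesis using * prefix_length_le by fastforce
next
  fix w w' assume "z = (w, True)" "z' = (w', True)"
  then show ?thesis using y by (auto simp: atom_def)
qed

lemma at_level_atom_subset:
  assumes s: "at_level t n s" and z: "z \<in> atoms t n" and y: "y \<in> atom t z" "y \<in> s"
  shows "atom t z \<subseteq> s"
proof -
  from s y consider (single) w where "s = {Inl w}" "length w < n"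
    | (cyl) w where "s = cyl t w" "length w \<le> n"
    unfolding at_level_def by auto
  then show ?thesis
  proof cases
    case single
    show ?thesis
    proof (rule atomsE[OF z])
      fix v assume "z = (v, False)" "length v = n"
      moreover from this have "prefix v w" using y single by (auto simp: atom_def Inl_in_cyl)
      ultimately show ?thesis using single prefix_length_le by fastforce
    qed (use y single in \<open>auto simp: atom_def\<close>)
  next
    case cyl
    show ?thesis
    proof (rule atomsE[OF z])
      fix v assume "z = (v, False)" "length v = n"
      moreover from this have "prefix w v" using y cyl wprefix_comparable[of w y v] by (auto simp: atom_def cyl_def)
      ultimately show ?thesis using cyl cyl_antimono by (auto simp: atom_def)
    qed (use y cyl in \<open>auto simp: atom_def\<close>)
  qed
qed

lemma at_level_covered_by_atoms:
  assumes s: "at_level t n s" and y: "y \<in> s"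
  shows "\<exists>z\<in>atoms t n. y \<in> atom t z"
proof -
  from s y consider (single) w where "s = {Inl w}" "length w < n" "t \<in> {TStar, TInf}"
    | (cyl) w where "s = cyl t w" "length w \<le> n" "t \<in> {TOmega, TInf}"
    unfolding at_level_def by auto
  then show ?thesis
  proof cases
    case single
    then show ?thesis using y by (intro bexI[of _ "(w, True)"]) (auto simp: atom_def atoms_def)
  next
    case cyl
    then have yw: "y \<in> words t" using y by (auto simp: cyl_def)
    show ?thesis
    proof (cases y)
      case (Inl v)
      show ?thesis
      proof (cases "length v < n")
        case True
        have "t = TInf" using cyl y Inl by (auto simp: cyl_def)
        then show ?thesis using True Inl by (intro bexI[of _ "(v, True)"]) (auto simp: atom_def atoms_def)
      next
        case False
        have "wprefix (take n v) y" using Inl by (metis wprefix.simps(1) append_take_drop_id)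
        then show ?thesis using False cyl yw
          by (intro bexI[of _ "(take n v, False)"]) (auto simp: atom_def atoms_def cyl_def)
      qed
    next
      case (Inr st)
      then show ?thesis using cyl yw
        by (intro bexI[of _ "(stake n st, False)"]) (auto simp: atom_def atoms_def cyl_def)
    qed
  qed
qed

lemma pts_semiring_at_level: "s \<in> pts_semiring t \<Longrightarrow> \<exists>n. at_level t n s"
  by (erule pts_semiring_cases) (auto simp: at_level_def)

lemma at_level_mono: "at_level t n s \<Longrightarrow> n \<le> m \<Longrightarrow> at_level t m s"
  unfolding at_level_def by force

lemma at_level_common:
  assumes "a \<in> pts_semiring t" "b \<in> pts_semiring t"
  obtains n where "at_level t n a" "at_level t n b"
proof -
  obtain na nb where "at_level t na a" "at_level t nb b" using pts_semiring_at_level assms by meson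
  then show ?thesis using at_level_mono[of t na a "max na nb"] at_level_mono[of t nb b "max na nb"] that
    by auto
qed

lemma semiring_of_sets_pts: "semiring_of_sets (words t) (pts_semiring t :: 'a::finite word set set)"
proof
  show "pts_semiring t \<subseteq> Pow (words t)" using pts_semiring_subset_words by auto
  show "{} \<in> pts_semiring t" by (cases t) auto
  fix a b :: "'a word set" assume a: "a \<in> pts_semiring t" and b: "b \<in> pts_semiring t"
  show "a \<inter> b \<in> pts_semiring t" by (rule pts_semiring_Int[OF a b])
  obtain n where la: "at_level t n a" and lb: "at_level t n b" using at_level_common[OF a b] .
  define Cs where "Cs = atom t ` {z \<in> atoms t n. atom t z \<subseteq> a \<and> atom t z \<inter> b = {}}"
  have "Cs \<subseteq> pts_semiring t" unfolding Cs_def using atom_in_pts_semiring by auto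
  moreover have "finite Cs" unfolding Cs_def
    by (rule finite_imageI, rule finite_subset[OF _ finite_atoms[of t n]]) auto
  moreover have "disjoint Cs"
    unfolding Cs_def disjoint_def using atoms_disjoint by blast
  moreover have "a - b \<subseteq> \<Union>Cs"
  proof
    fix y assume y: "y \<in> a - b"
    then obtain z where z: "z \<in> atoms t n" "y \<in> atom t z" using at_level_covered_by_atoms[OF la] by blast
    then have "atom t z \<subseteq> a" using at_level_atom_subset[OF la] y by blast
    moreover have "atom t z \<inter> b = {}" using at_level_atom_subset[OF lb z(1)] y z by blast
    ultimately show "y \<in> \<Union>Cs" using z unfolding Cs_def by blast
  qed
  moreover have "\<Union>Cs \<subseteq> a - b" by (auto simp: Cs_def)
  ultimately show "\<exists>C\<subseteq>pts_semiring t. finite C \<and> disjoint C \<and> a - b = \<Union>C" by blast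
qed

lemma finite_nonempty_at_level:
  fixes A :: "nat \<Rightarrow> 'a::finite word set"
  assumes "disjoint_family A" and "\<And>i. at_level t n (A i)"
  shows "finite {i. A i \<noteq> {}}"
proof -
  define I where "I = {i. A i \<noteq> {}}"
  have "\<exists>z\<in>atoms t n. atom t z \<subseteq> A i" if "i \<in> I" for i
  proof -
    from that obtain y where y: "y \<in> A i" unfolding I_def by auto
    then obtain z where "z \<in> atoms t n" "y \<in> atom t z" using at_level_covered_by_atoms assms(2) by blast
    then show ?thesis using at_level_atom_subset[OF assms(2)] y by blast
  qed
  then obtain f where f: "\<And>i. i \<in> I \<Longrightarrow> f i \<in> atoms t n \<and> atom t (f i) \<subseteq> A i" by metis
  have "inj_on f I"
  proof (rule inj_onI)
    fix i j assume i: "i \<in> I" and j: "j \<in> I" and "f i = f j"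
    moreover obtain y where "y \<in> atom t (f i)" using atom_nonempty f[OF i] by blast
    ultimately have "y \<in> A i" "y \<in> A j" using f[OF i] f[OF j] by auto
    then show "i = j" using assms(1) unfolding disjoint_family_on_def by blast
  qed
  moreover have "f ` I \<subseteq> atoms t n" using f by auto
  ultimately show ?thesis unfolding I_def[symmetric] using finite_atoms by (meson finite_subset inj_on_finite)
qed

lemma sum_pieces_containing_atom:
  fixes A :: "nat \<Rightarrow> 'a::finite word set"
  assumes dj: "disjoint_family A" and lA: "\<And>i. at_level t n (A i)" and z: "z \<in> atoms t n"
    and I: "finite I" "{i. A i \<noteq> {}} \<subseteq> I"
  shows "(\<Sum>i\<in>I. if atom t z \<subseteq> A i then c else 0) = (if atom t z \<subseteq> (\<Union>i. A i) then c else 0)"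
proof (cases "atom t z \<subseteq> (\<Union>i. A i)")
  case True
  obtain y where y: "y \<in> atom t z" using atom_nonempty[OF z] by blast
  then obtain i0 where "y \<in> A i0" using True by auto
  then have i0: "atom t z \<subseteq> A i0" "i0 \<in> I" using at_level_atom_subset[OF lA z] y I(2) by blast+
  have "{i \<in> I. atom t z \<subseteq> A i} = {i0}"
    using i0 y dj unfolding disjoint_family_on_def by blast
  then show ?thesis using True sum.inter_filter[OF I(1), of "\<lambda>_. c" "\<lambda>i. atom t z \<subseteq> A i"] by simp
next
  case False
  then have "\<not> atom t z \<subseteq> A i" for i by auto
  then show ?thesis using False by simp
qed

section \<open>Countable partitions have a common level\<close>

lemma extensible_path:
  assumes "P u" and step: "\<And>w. P w \<Longrightarrow> \<exists>a. P (w @ [a])"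
  obtains s where "stake (length u) s = u" "\<And>n. P (stake (length u + n) s)"
proof -
  define nxt where "nxt w = (SOME a. P (w @ [a]))" for w
  define path where "path = rec_nat u (\<lambda>_ w. w @ [nxt w])"
  have path_0: "path 0 = u" and path_Suc: "path (Suc n) = path n @ [nxt (path n)]" for n
    by (simp_all add: path_def)
  have P_path: "P (path n)" for n
  proof (induction n)
    case (Suc n)
    then show ?case using step someI_ex unfolding path_Suc nxt_def by metis
  qed (simp add: assms(1) path_0)
  define s where "s = u @- smap (\<lambda>n. nxt (path n)) nats"
  have stake_s: "stake (length u + n) s = path n" for n
  proof (induction n)
    case (Suc n)
    have "stake (length u + Suc n) s = stake (length u + n) s @ [s !! (length u + n)]"
      by (simp add: stake_Suc[symmetric])
    also have "s !! (length u + n) = nxt (path n)" by (simp add: s_def)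
    finally show ?case using Suc path_Suc by simp
  qed (simp add: s_def path_0 stake_shift)
  show ?thesis by (rule that[of s]) (simp_all add: stake_s[of 0, simplified] path_0 stake_s P_path)
qed

text \<open>Konig's lemma: otherwise the words through \<open>u\<close> that have extensions of every length with no
  prefix in \<open>V\<close> form an infinite path, i.e.\ a stream through \<open>u\<close> with no prefix in \<open>V\<close>.\<close>

lemma konig_prefix_cover:
  fixes u :: "'a::finite list" and V :: "'a list set"
  assumes cover: "\<And>s. stake (length u) s = u \<Longrightarrow> \<exists>v\<in>V. stake (length v) s = v"
  shows "\<exists>N. \<forall>z. length z = N \<longrightarrow> (\<exists>v\<in>V. prefix v (u @ z))"
proof (rule ccontr)
  define bad where "bad w \<longleftrightarrow> (\<forall>k. \<exists>z. length z = k \<and> (\<forall>v\<in>V. \<not> prefix v (w @ z)))" for w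
  assume "\<not> ?thesis"
  then have "bad u" unfolding bad_def by blast
  moreover have "\<exists>a. bad (w @ [a])" if bw: "bad w" for w
  proof (rule ccontr)
    assume "\<not> (\<exists>a. bad (w @ [a]))"
    then have "\<forall>a. \<exists>k. \<forall>z. length z = k \<longrightarrow> (\<exists>v\<in>V. prefix v (w @ a # z))"
      unfolding bad_def by auto
    then obtain kf where kf: "\<And>a z. length z = kf a \<Longrightarrow> \<exists>v\<in>V. prefix v (w @ a # z)" by metis
    define K where "K = Max (range kf)"
    have kK: "kf a \<le> K" for a unfolding K_def by (rule Max_ge) auto
    from bw obtain z where z: "length z = Suc K" "\<forall>v\<in>V. \<not> prefix v (w @ z)" unfolding bad_def by blast
    then obtain a z' where az: "z = a # z'" "length z' = K" by (cases z) auto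
    have "length (take (kf a) z') = kf a" using kK[of a] az by simp
    then obtain v where v: "v \<in> V" "prefix v (w @ a # take (kf a) z')" using kf by blast
    have "prefix (w @ a # take (kf a) z') (w @ z)" using az take_is_prefix[of "kf a" z'] by simp
    then have "prefix v (w @ z)" using v prefix_order.trans by blast
    then show False using z v by blast
  qed
  ultimately obtain s where "stake (length u) s = u" and s: "\<And>n. bad (stake (length u + n) s)"
    using extensible_path[of bad u] by blast
  then obtain v where v: "v \<in> V" "stake (length v) s = v" using cover by blast
  then have "prefix v (stake (length u + length v) s @ [])" using prefix_stakeI[of v] by simp
  then show False using s[of "length v"] v unfolding bad_def by blast
qed

lemma cylinder_partition_prefix_bound:
  fixes A :: "nat \<Rightarrow> 'a::finite word set"
  assumes t: "t \<in> {TOmega, TInf}" and A: "range A \<subseteq> pts_semiring t" and U: "(\<Union>i. A i) = cyl t u"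
  obtains N where "\<And>z. length z = N \<Longrightarrow> \<exists>v j. A j = cyl t v \<and> prefix v (u @ z)"
proof -
  define V where "V = {v. \<exists>i. A i = cyl t v}"
  have "\<exists>v\<in>V. stake (length v) s = v" if s: "stake (length u) s = u" for s
  proof -
    have "Inr s \<in> cyl t u" using s Inr_in_words[OF t] by (simp add: cyl_def)
    then obtain i where i: "Inr s \<in> A i" using U by auto
    moreover from A have "A i \<in> pts_semiring t" by auto
    ultimately obtain v where "A i = cyl t v" by (auto elim: pts_semiring_cases)
    then show ?thesis using i unfolding V_def by (auto simp: cyl_def)
  qed
  then show ?thesis using konig_prefix_cover[of u V] that unfolding V_def by blast
qed

context
  fixes A :: "nat \<Rightarrow> 'a::finite word set" and t u N
  assumes t: "t \<in> {TOmega, TInf}" and dj: "disjoint_family A" and pieces: "\<And>i. A i \<subseteq> cyl t u"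
    and bound: "\<And>z. length z = N \<Longrightarrow> \<exists>v j. A j = cyl t v \<and> prefix v (u @ z)"
begin

lemma singleton_piece_short:
  assumes i: "A i = {Inl w}"
  shows "length w < length u + N"
proof (rule ccontr)
  assume "\<not> length w < length u + N"
  moreover have pu: "prefix u w" and ww: "Inl w \<in> words t" using pieces[of i] i by (simp_all add: Inl_in_cyl)
  ultimately have "length (take N (drop (length u) w)) = N" by auto
  from bound[OF this] obtain v j where j: "A j = cyl t v" and v: "prefix v (u @ take N (drop (length u) w))"
    by blast
  have "prefix (u @ take N (drop (length u) w)) w"
    using pu take_is_prefix[of N "drop (length u) w"] by (auto simp: prefix_def)
  then have "Inl w \<in> A j" using v ww j prefix_order.trans by (auto simp: Inl_in_cyl)
  then have "i = j" using dj i unfolding disjoint_family_on_def by blast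
  then show False using j i cyl_neq_singleton[OF t] by metis
qed

lemma cylinder_piece_short:
  assumes i: "A i = cyl t v0"
  obtains v where "A i = cyl t v" "length v \<le> length u + N"
proof -
  define s :: "'a stream" where "s = v0 @- sconst undefined"
  have s_i: "Inr s \<in> A i" using i shift_in_cyl[OF t] s_def by simp
  then have "stake (length u) s = u" using pieces[of i] by (auto simp: cyl_def)
  then have "prefix u (stake (length u + N) s)" by (intro prefix_stakeI) auto
  then have "u @ drop (length u) (stake (length u + N) s) = stake (length u + N) s"
    "length (drop (length u) (stake (length u + N) s)) = N"
    by (auto simp: prefix_def)
  with bound obtain v j where j: "A j = cyl t v" and v: "prefix v (stake (length u + N) s)" by metis
  have "Inr s \<in> A j" using j prefix_stakeD[OF v] Inr_in_words[OF t] by (simp add: cyl_def)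
  then have "i = j" using dj s_i unfolding disjoint_family_on_def by blast
  then show ?thesis using j prefix_length_le[OF v] that by auto
qed

end

lemma cylinder_partition_common_level:
  fixes A :: "nat \<Rightarrow> 'a::finite word set"
  assumes t: "t \<in> {TOmega, TInf}" and A: "range A \<subseteq> pts_semiring t" and dj: "disjoint_family A"
    and U: "(\<Union>i. A i) = cyl t u"
  obtains n where "\<And>i. at_level t n (A i)"
proof -
  obtain N where N: "\<And>z. length z = N \<Longrightarrow> \<exists>v j. A j = cyl t v \<and> prefix v (u @ z)"
    using cylinder_partition_prefix_bound[OF t A U] by blast
  have pieces: "\<And>i. A i \<subseteq> cyl t u" using U by auto
  have "at_level t (length u + N) (A i)" for i
  proof -
    from A have "A i \<in> pts_semiring t" by auto
    then show ?thesis
    proof (cases rule: pts_semiring_cases)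
      case (2 w)
      then show ?thesis using singleton_piece_short[OF t dj pieces N] by (auto simp: at_level_def)
    next
      case (3 v0)
      then show ?thesis using cylinder_piece_short[OF t dj pieces N] t by (metis at_level_def)
    qed (simp add: at_level_def)
  qed
  then show ?thesis using that by blast
qed

lemma partition_common_level:
  fixes A :: "nat \<Rightarrow> 'a::finite word set"
  assumes A: "range A \<subseteq> pts_semiring t" and dj: "disjoint_family A" and U: "(\<Union>i. A i) = B"
    and B: "B \<in> pts_semiring t"
  obtains n where "\<And>i. at_level t n (A i)"
  using B
proof (cases rule: pts_semiring_cases)
  case 1
  then have "at_level t 0 (A i)" for i using U by (auto simp: at_level_def)
  then show ?thesis using that by blast
next
  case (2 w)
  have "at_level t (Suc (length w)) (A i)" for i
  proof -
    have "A i \<subseteq> {Inl w}" using U 2 by auto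
    moreover from A have "A i \<in> pts_semiring t" by auto
    ultimately show ?thesis using cyl_nonempty[of t] 2
      by (elim pts_semiring_cases) (auto simp: at_level_def subset_singleton_iff dest: cyl_neq_singleton)
  qed
  then show ?thesis using that by blast
next
  case (3 u)
  then show ?thesis using cylinder_partition_common_level[OF _ A dj] U that by blast
qed

section \<open>The transition kernels\<close>

lemma sets_plus_one_space:
  "sets (plus_one_space N) = sigma_sets (insert None (Some ` space N))
     ({Some ` S | S. S \<in> sets N} \<union> {insert None (Some ` S) | S. S \<in> sets N})"
  unfolding plus_one_space_def by (rule sets_measure_of) (auto dest: sets.sets_into_space)

lemma space_plus_one_space: "space (plus_one_space N) = insert None (Some ` space N)"
  unfolding plus_one_space_def by (rule space_measure_of) (auto dest: sets.sets_into_space)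

lemma sets_some_space: "sets (some_space N) = sigma_sets (Some ` space N) {Some ` S | S. S \<in> sets N}"
  unfolding some_space_def by (rule sets_measure_of) (auto dest: sets.sets_into_space)

lemma space_some_space: "space (some_space N) = Some ` space N"
  unfolding some_space_def by (rule space_measure_of) (auto dest: sets.sets_into_space)

lemma Some_image_in_pts_cod: "S \<in> sets (count_space UNIV \<Otimes>\<^sub>M M) \<Longrightarrow> Some ` S \<in> sets (pts_cod t M)"
  unfolding pts_cod_def by (auto simp: sets_plus_one_space sets_some_space intro: sigma_sets.Basic)

lemma None_in_pts_cod: "t \<in> {TStar, TInf} \<Longrightarrow> {None} \<in> sets (pts_cod t M)"
  unfolding pts_cod_def using sigma_sets.Basic[of "insert None (Some ` {})"]
  by (auto simp: sets_plus_one_space)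

lemma space_pts_cod:
  "space (pts_cod t M) =
    (if t \<in> {TStar, TInf} then insert None (Some ` (UNIV \<times> space M)) else Some ` (UNIV \<times> space M))"
  unfolding pts_cod_def by (auto simp: space_plus_one_space space_some_space space_pair_measure)

lemma space_transP: "space (transP M \<alpha> a x) = space M"
  unfolding transP_def by (simp add: space_measure_of_conv)

lemma sets_transP [measurable_cong]: "sets (transP M \<alpha> a x) = sets M"
  unfolding transP_def by (simp add: sets_measure_of_conv sets.sigma_sets_eq sets.space_closed)

lemma borel_measurable_transP: "f \<in> borel_measurable M \<Longrightarrow> f \<in> borel_measurable (transP M \<alpha> a x)"
  by (simp only: measurable_cong_sets[OF sets_transP refl])

locale pts =
  fixes t :: ptstype and M :: "'x measure" and \<alpha> :: "'x \<Rightarrow> ('a::finite \<times> 'x) option measure"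
  assumes is_pts: "is_pts t M \<alpha>"
begin

abbreviation cod :: "('a \<times> 'x) option measure" where "cod \<equiv> pts_cod t M"

definition letter_event :: "'a \<Rightarrow> ('a \<times> 'x) option set" where
  "letter_event a = Some ` ({a} \<times> space M)"

text \<open>On termination the default \<open>x0\<close> only keeps the map total.\<close>

definition next_state :: "'x \<Rightarrow> ('a \<times> 'x) option \<Rightarrow> 'x" where
  "next_state x0 y = (case y of None \<Rightarrow> x0 | Some p \<Rightarrow> snd p)"

lemma letter_event_in_cod: "letter_event a \<in> sets cod"
  unfolding letter_event_def by (rule Some_image_in_pts_cod) auto

lemma measurable_alpha: "\<alpha> \<in> M \<rightarrow>\<^sub>M subprob_algebra cod"
  using is_pts unfolding is_pts_def by (auto split: if_splits dest: measurable_prob_algebraD)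

lemma subprob_space_alpha: "x \<in> space M \<Longrightarrow> subprob_space (\<alpha> x)"
  using measurable_space[OF measurable_alpha] by (auto simp: space_subprob_algebra)

lemma sets_alpha [measurable_cong]: "x \<in> space M \<Longrightarrow> sets (\<alpha> x) = sets cod"
  using measurable_space[OF measurable_alpha] by (auto simp: space_subprob_algebra)

lemma space_alpha: "x \<in> space M \<Longrightarrow> space (\<alpha> x) = space cod"
  using sets_eq_imp_space_eq[OF sets_alpha] .

lemma prob_space_alpha: "t \<in> {TOmega, TInf} \<Longrightarrow> x \<in> space M \<Longrightarrow> prob_space (\<alpha> x)"
  using measurable_space[OF is_pts[unfolded is_pts_def]] by (auto simp: space_prob_algebra)

lemma emeasure_alpha_le_1: "x \<in> space M \<Longrightarrow> emeasure (\<alpha> x) S \<le> 1"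
  using subprob_space_alpha subprob_space.subprob_emeasure_le_1 by blast

lemma measurable_next_state:
  assumes x0: "x0 \<in> space M"
  shows "next_state x0 \<in> cod \<rightarrow>\<^sub>M M"
proof (rule measurableI)
  fix y assume "y \<in> space cod"
  then show "next_state x0 y \<in> space M" using x0 by (auto simp: space_pts_cod next_state_def split: if_splits)
next
  fix S assume S: "S \<in> sets M"
  have "next_state x0 -` S \<inter> space cod =
      (if x0 \<in> S then {None} \<inter> space cod else {}) \<union> Some ` (UNIV \<times> S)"
    using sets.sets_into_space[OF S]
    by (auto simp: space_pts_cod next_state_def split: option.splits)
  moreover have "{None} \<inter> space cod \<in> sets cod"
    by (cases "t \<in> {TStar, TInf}") (auto simp: None_in_pts_cod space_pts_cod)
  moreover have "Some ` (UNIV \<times> S) \<in> sets cod"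
    by (rule Some_image_in_pts_cod) (use S in auto)
  ultimately show "next_state x0 -` S \<inter> space cod \<in> sets cod" by auto
qed

lemma transP_eq_distr:
  assumes x: "x \<in> space M"
  shows "transP M \<alpha> a x = distr (density (\<alpha> x) (indicator (letter_event a))) M (next_state x)"
    (is "_ = ?D")
proof -
  have mp: "next_state x \<in> density (\<alpha> x) (indicator (letter_event a)) \<rightarrow>\<^sub>M M"
    using measurable_next_state[OF x] by (simp add: measurable_cong_sets[OF sets_alpha[OF x] refl])
  have "transP M \<alpha> a x = measure_of (space M) (sets M) (emeasure ?D)"
    unfolding transP_def
  proof (rule measure_of_eq)
    show "sets M \<subseteq> Pow (space M)" by (auto dest: sets.sets_into_space)
  next
    fix S assume "S \<in> sigma_sets (space M) (sets M)"
    then have S: "S \<in> sets M" by (simp add: sets.sigma_sets_eq)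
    have "emeasure ?D S = emeasure (density (\<alpha> x) (indicator (letter_event a))) (next_state x -` S \<inter> space (\<alpha> x))"
      using S mp by (simp add: emeasure_distr)
    also have "\<dots> = emeasure (\<alpha> x) (letter_event a \<inter> (next_state x -` S \<inter> space (\<alpha> x)))"
      using letter_event_in_cod measurable_sets[OF measurable_next_state[OF x] S]
      by (intro emeasure_restricted) (simp_all add: sets_alpha[OF x] space_alpha[OF x])
    also have "letter_event a \<inter> (next_state x -` S \<inter> space (\<alpha> x)) = Some ` ({a} \<times> S)"
      using sets.sets_into_space[OF S]
      by (auto simp: letter_event_def next_state_def space_alpha[OF x] space_pts_cod)
    finally show "emeasure (\<alpha> x) (Some ` ({a} \<times> S)) = emeasure ?D S" by simp
  qed
  also have "\<dots> = ?D" using measure_of_of_measure[of ?D] by simp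
  finally show ?thesis .
qed

lemma measurable_letter_integrand:
  fixes f :: "'x \<Rightarrow> ennreal"
  assumes f: "f \<in> borel_measurable M"
  shows "(\<lambda>y. indicator (letter_event a) y * f (snd (the y))) \<in> borel_measurable cod"
proof (cases "space M = {}")
  case True
  then show ?thesis
    by (subst measurable_cong[where g="\<lambda>_. 0"]) (auto simp: letter_event_def)
next
  case False
  then obtain x0 where x0: "x0 \<in> space M" by auto
  have "(\<lambda>y. indicator (letter_event a) y * f (next_state x0 y)) \<in> borel_measurable cod"
    by (intro borel_measurable_times_ennreal borel_measurable_indicator letter_event_in_cod
        measurable_compose[OF measurable_next_state[OF x0] f])
  then show ?thesis
    by (rule measurable_cong[THEN iffD1, rotated])
      (auto simp: letter_event_def next_state_def indicator_def)
qed

lemma nn_integral_transP: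
  fixes f :: "'x \<Rightarrow> ennreal"
  assumes x: "x \<in> space M" and f: "f \<in> borel_measurable M"
  shows "(\<integral>\<^sup>+y. f y \<partial>transP M \<alpha> a x) = (\<integral>\<^sup>+y. indicator (letter_event a) y * f (snd (the y)) \<partial>\<alpha> x)"
proof -
  have m: "next_state x \<in> \<alpha> x \<rightarrow>\<^sub>M M"
    using measurable_next_state[OF x] by (simp add: measurable_cong_sets[OF sets_alpha[OF x] refl])
  have "(\<integral>\<^sup>+y. f y \<partial>transP M \<alpha> a x) =
      (\<integral>\<^sup>+y. f (next_state x y) \<partial>density (\<alpha> x) (indicator (letter_event a)))"
    unfolding transP_eq_distr[OF x] using m f by (simp add: nn_integral_distr)
  also have "\<dots> = (\<integral>\<^sup>+y. indicator (letter_event a) y * f (next_state x y) \<partial>\<alpha> x)"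
    by (rule nn_integral_density)
      (simp_all add: measurable_cong_sets[OF sets_alpha[OF x] refl]
        borel_measurable_indicator[OF letter_event_in_cod] measurable_compose[OF measurable_next_state[OF x] f])
  also have "\<dots> = (\<integral>\<^sup>+y. indicator (letter_event a) y * f (snd (the y)) \<partial>\<alpha> x)"
    by (rule nn_integral_cong) (auto simp: letter_event_def next_state_def indicator_def)
  finally show ?thesis .
qed

lemma measurable_nn_integral_transP:
  assumes f: "f \<in> borel_measurable M"
  shows "(\<lambda>x. \<integral>\<^sup>+y. f y \<partial>transP M \<alpha> a x) \<in> borel_measurable M"
  using measurable_compose[OF measurable_alpha
      nn_integral_measurable_subprob_algebra[OF measurable_letter_integrand[OF f]]]
  by (subst measurable_cong[OF nn_integral_transP[OF _ f]]) auto

lemma nn_integral_transP_one: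
  assumes x: "x \<in> space M"
  shows "(\<integral>\<^sup>+y. 1 \<partial>transP M \<alpha> a x) = emeasure (\<alpha> x) (letter_event a)"
  using nn_integral_transP[OF x, of "\<lambda>_. 1"] letter_event_in_cod by (simp add: sets_alpha[OF x])

lemma nn_integral_transP_le:
  assumes x: "x \<in> space M" and f: "\<And>y. y \<in> space M \<Longrightarrow> f y \<le> 1"
  shows "(\<integral>\<^sup>+y. f y \<partial>transP M \<alpha> a x) \<le> emeasure (\<alpha> x) (letter_event a)"
proof -
  have "(\<integral>\<^sup>+y. f y \<partial>transP M \<alpha> a x) \<le> (\<integral>\<^sup>+y. 1 \<partial>transP M \<alpha> a x)"
    by (rule nn_integral_mono) (use f in \<open>simp add: space_transP\<close>)
  then show ?thesis using nn_integral_transP_one[OF x] by simp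
qed

lemma emeasure_None_nonterminating:
  assumes "t \<notin> {TStar, TInf}" and "x \<in> space M"
  shows "emeasure (\<alpha> x) {None} = 0"
proof -
  have "{None} \<notin> sets cod"
    using assms(1) sets.sets_into_space[of "{None}" cod] by (auto simp: space_pts_cod)
  then show ?thesis using sets_alpha[OF assms(2)] by (simp add: emeasure_notin_sets)
qed

lemma emeasure_alpha_space:
  assumes x: "x \<in> space M"
  shows "emeasure (\<alpha> x) (space (\<alpha> x)) = emeasure (\<alpha> x) {None} + (\<Sum>a\<in>UNIV. emeasure (\<alpha> x) (letter_event a))"
proof -
  have E: "\<And>a. letter_event a \<in> sets (\<alpha> x)" using letter_event_in_cod sets_alpha[OF x] by simp
  have sum_E: "(\<Sum>a\<in>UNIV. emeasure (\<alpha> x) (letter_event a)) = emeasure (\<alpha> x) (\<Union>a. letter_event a)"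
    using E by (intro sum_emeasure) (auto simp: disjoint_family_on_def letter_event_def)
  have UE: "(\<Union>a. letter_event a) = Some ` (UNIV \<times> space M)" by (auto simp: letter_event_def)
  show ?thesis
  proof (cases "t \<in> {TStar, TInf}")
    case True
    have "emeasure (\<alpha> x) (space (\<alpha> x)) = emeasure (\<alpha> x) ({None} \<union> (\<Union>a. letter_event a))"
      using True by (simp add: space_alpha[OF x] space_pts_cod UE)
    also have "\<dots> = emeasure (\<alpha> x) {None} + emeasure (\<alpha> x) (\<Union>a. letter_event a)"
      using None_in_pts_cod[OF True] sets_alpha[OF x] E
      by (intro plus_emeasure[symmetric]) (auto simp: letter_event_def)
    finally show ?thesis using sum_E by simp
  next
    case False
    then show ?thesis using emeasure_None_nonterminating[OF False x] UE sum_E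
      by (simp add: space_alpha[OF x] space_pts_cod)
  qed
qed

section \<open>The canonical solution of the trace equations\<close>

text \<open>The values the trace equations force on \<open>{u}\<close> and on the cylinder of \<open>u\<close>.\<close>

primrec term_prob :: "'a list \<Rightarrow> 'x \<Rightarrow> ennreal" where
  "term_prob [] x = emeasure (\<alpha> x) {None}"
| "term_prob (a # u) x = (\<integral>\<^sup>+x'. term_prob u x' \<partial>transP M \<alpha> a x)"

primrec prefix_prob :: "'a list \<Rightarrow> 'x \<Rightarrow> ennreal" where
  "prefix_prob [] x = 1"
| "prefix_prob (a # u) x = (\<integral>\<^sup>+x'. prefix_prob u x' \<partial>transP M \<alpha> a x)"

lemma measurable_term_prob: "term_prob u \<in> borel_measurable M"
proof (induction u)
  case Nil
  show ?case
  proof (cases "t \<in> {TStar, TInf}")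
    case True
    then show ?thesis using measurable_compose[OF measurable_alpha
        measurable_emeasure_subprob_algebra[OF None_in_pts_cod[OF True]]] by simp
  next
    case False
    then show ?thesis
      by (subst measurable_cong[where g="\<lambda>_. 0"]) (simp_all add: emeasure_None_nonterminating)
  qed
qed (simp add: measurable_nn_integral_transP)

lemma measurable_prefix_prob: "prefix_prob u \<in> borel_measurable M"
  by (induction u) (simp_all add: measurable_nn_integral_transP)

lemma term_prob_nonterminating: "t \<notin> {TStar, TInf} \<Longrightarrow> x \<in> space M \<Longrightarrow> term_prob u x = 0"
proof (induction u arbitrary: x)
  case (Cons a u)
  then have "term_prob (a # u) x = (\<integral>\<^sup>+x'. 0 \<partial>transP M \<alpha> a x)"
    unfolding term_prob.simps by (intro nn_integral_cong) (simp add: space_transP)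
  then show ?case by simp
qed (simp add: emeasure_None_nonterminating)

lemma term_prob_le_1: "x \<in> space M \<Longrightarrow> term_prob u x \<le> 1"
proof (induction u arbitrary: x)
  case (Cons a u)
  then show ?case
    using nn_integral_transP_le[of x "term_prob u" a] emeasure_alpha_le_1[of x "letter_event a"] by simp
qed (simp add: emeasure_alpha_le_1)

lemma prefix_prob_le_1: "x \<in> space M \<Longrightarrow> prefix_prob u x \<le> 1"
proof (induction u arbitrary: x)
  case (Cons a u)
  then show ?case
    using nn_integral_transP_le[of x "prefix_prob u" a] emeasure_alpha_le_1[of x "letter_event a"] by simp
qed simp

lemma sum_term_prob_le_1: "x \<in> space M \<Longrightarrow> (\<Sum>u\<in>{u. length u < k}. term_prob u x) \<le> 1"
proof (induction k arbitrary: x)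
  case (Suc k)
  have "(\<Sum>u\<in>{u. length u < Suc k}. term_prob u x) =
      term_prob [] x + (\<Sum>a\<in>UNIV. \<integral>\<^sup>+y. (\<Sum>u\<in>{u. length u < k}. term_prob u y) \<partial>transP M \<alpha> a x)"
    by (simp add: sum_lists_shorter_Suc nn_integral_sum borel_measurable_transP measurable_term_prob)
  also have "\<dots> \<le> term_prob [] x + (\<Sum>a\<in>UNIV. emeasure (\<alpha> x) (letter_event a))"
    by (intro add_mono order_refl sum_mono nn_integral_transP_le Suc)
  also have "\<dots> = emeasure (\<alpha> x) (space (\<alpha> x))" using emeasure_alpha_space[OF Suc.prems] by simp
  also have "\<dots> \<le> 1" using emeasure_alpha_le_1[OF Suc.prems] .
  finally show ?case .
qed simp

lemma prefix_prob_split: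
  assumes t: "t \<in> {TOmega, TInf}"
  shows "x \<in> space M \<Longrightarrow> prefix_prob w x = term_prob w x + (\<Sum>a\<in>UNIV. prefix_prob (w @ [a]) x)"
proof (induction w arbitrary: x)
  case Nil
  have "emeasure (\<alpha> x) (space (\<alpha> x)) = 1"
    using prob_space_alpha[OF t Nil] prob_space.emeasure_space_1 by blast
  then show ?case using emeasure_alpha_space[OF Nil] nn_integral_transP_one[OF Nil] by simp
next
  case (Cons a w)
  have "prefix_prob (a # w) x =
      (\<integral>\<^sup>+y. term_prob w y + (\<Sum>b\<in>UNIV. prefix_prob (w @ [b]) y) \<partial>transP M \<alpha> a x)"
    unfolding prefix_prob.simps by (rule nn_integral_cong) (use Cons in \<open>simp add: space_transP\<close>)
  also have "\<dots> = term_prob (a # w) x + (\<Sum>b\<in>UNIV. prefix_prob (a # w @ [b]) x)"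
    using measurable_term_prob measurable_prefix_prob
    by (simp add: nn_integral_add[OF borel_measurable_transP borel_measurable_transP]
        nn_integral_sum borel_measurable_transP)
  finally show ?case by simp
qed

lemma prefix_prob_expand:
  assumes t: "t \<in> {TOmega, TInf}" and x: "x \<in> space M"
  shows "prefix_prob w x =
    (\<Sum>z\<in>{z. length z = k}. prefix_prob (w @ z) x) + (\<Sum>z\<in>{z. length z < k}. term_prob (w @ z) x)"
proof (induction k arbitrary: w)
  case 0
  have "{z::'a list. length z = 0} = {[]}" by auto
  then show ?case by simp
next
  case (Suc k)
  have "prefix_prob w x = term_prob w x + (\<Sum>a\<in>UNIV. prefix_prob (w @ [a]) x)"
    by (rule prefix_prob_split[OF t x])
  also have "\<dots> = term_prob w x + (\<Sum>a\<in>UNIV. (\<Sum>z\<in>{z. length z = k}. prefix_prob (w @ a # z) x)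
      + (\<Sum>z\<in>{z. length z < k}. term_prob (w @ a # z) x))"
    by (simp add: Suc[of "w @ [_]"])
  also have "\<dots> = (\<Sum>z\<in>{z. length z = Suc k}. prefix_prob (w @ z) x)
      + (\<Sum>z\<in>{z. length z < Suc k}. term_prob (w @ z) x)"
    by (simp only: sum_lists_length_Suc sum_lists_shorter_Suc sum.distrib append_Nil2)
      (rule add.left_commute)
  finally show ?case .
qed

definition atom_weight :: "'x \<Rightarrow> 'a list \<times> bool \<Rightarrow> ennreal" where
  "atom_weight x z = (if snd z then term_prob (fst z) x else prefix_prob (fst z) x)"

lemma atom_weight_simps [simp]:
  "atom_weight x (w, False) = prefix_prob w x" "atom_weight x (w, True) = term_prob w x"
  by (simp_all add: atom_weight_def)

lemma prefix_prob_sum_atoms: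
  assumes t: "t \<in> {TOmega, TInf}" and x: "x \<in> space M" and w: "length w \<le> n"
  shows "prefix_prob w x = (\<Sum>z\<in>atoms t n. if atom t z \<subseteq> cyl t w then atom_weight x z else 0)"
proof -
  define k where "k = n - length w"
  define ZF where "ZF = (\<lambda>v. (v, False)) ` {v::'a list. length v = n}"
  define ZT where "ZT = (if t = TInf then (\<lambda>v. (v, True)) ` {v::'a list. length v < n} else {})"
  let ?g = "\<lambda>z. if atom t z \<subseteq> cyl t w then atom_weight x z else 0"
  have "sum ?g ZF = (\<Sum>v\<in>{v. length v = n}. ?g (v, False))"
    unfolding ZF_def by (subst sum.reindex) (auto simp: inj_on_def)
  also have "\<dots> = (\<Sum>v\<in>{v. length v = n}. if cyl t v \<subseteq> cyl t w then prefix_prob v x else 0)"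
    by (simp add: atom_def cong: if_cong)
  also have "\<dots> = (\<Sum>v\<in>{v. length v = n}. if prefix w v then prefix_prob v x else 0)"
    by (rule sum.cong) (use cyl_subset_iff[OF t] w in auto)
  also have "\<dots> = (\<Sum>z\<in>{z. length z = k}. prefix_prob (w @ z) x)"
    using w by (subst sum_extensions[OF finite_lists_length]) (auto simp: k_def intro!: sum.cong)
  finally have F: "sum ?g ZF = (\<Sum>z\<in>{z. length z = k}. prefix_prob (w @ z) x)" .
  have T: "sum ?g ZT = (\<Sum>z\<in>{z. length z < k}. term_prob (w @ z) x)"
  proof (cases "t = TInf")
    case True
    then have "sum ?g ZT = (\<Sum>v\<in>{v. length v < n}. ?g (v, True))"
      unfolding ZT_def by (simp add: sum.reindex inj_on_def)
    also have "\<dots> = (\<Sum>v\<in>{v. length v < n}. if {Inl v} \<subseteq> cyl t w then term_prob v x else 0)"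
      by (simp add: atom_def cong: if_cong)
    also have "\<dots> = (\<Sum>v\<in>{v. length v < n}. if prefix w v then term_prob v x else 0)"
      by (rule sum.cong) (use True in \<open>auto simp: Inl_in_cyl\<close>)
    also have "\<dots> = (\<Sum>z\<in>{z. length z < k}. term_prob (w @ z) x)"
      using w by (subst sum_extensions[OF finite_lists_shorter]) (auto simp: k_def intro!: sum.cong)
    finally show ?thesis .
  next
    case False
    then show ?thesis using t term_prob_nonterminating[OF _ x] by (simp add: ZT_def)
  qed
  have "atoms t n = ZF \<union> ZT" using t unfolding atoms_def ZF_def ZT_def by auto
  moreover have "finite ZF" "finite ZT"
    unfolding ZF_def ZT_def using finite_lists_length finite_lists_shorter by auto
  moreover have "ZF \<inter> ZT = {}" unfolding ZF_def ZT_def by auto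
  ultimately have "sum ?g (atoms t n) = sum ?g ZF + sum ?g ZT" by (simp add: sum.union_disjoint)
  then show ?thesis using F T prefix_prob_expand[OF t x, of w k] by simp
qed

text \<open>Distinct words can name the same cylinder (e.g.\ over a one-letter alphabet); this makes the
  canonical trace of a cylinder independent of the word chosen for it.\<close>

lemma prefix_prob_cong_cyl:
  assumes "t \<in> {TOmega, TInf}" "x \<in> space M" "cyl t u = cyl t v"
  shows "prefix_prob u x = prefix_prob v x"
  using prefix_prob_sum_atoms[OF assms(1,2), of u "max (length u) (length v)"]
    prefix_prob_sum_atoms[OF assms(1,2), of v "max (length u) (length v)"] assms(3)
  by simp

definition canonical_trace :: "'x \<Rightarrow> 'a word set \<Rightarrow> ennreal" where
  "canonical_trace x S = (if \<exists>u. S = {Inl u} then term_prob (SOME u. S = {Inl u}) x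
     else if t \<in> {TOmega, TInf} \<and> (\<exists>u. S = cyl t u) then prefix_prob (SOME u. S = cyl t u) x else 0)"

lemma canonical_trace_singleton: "canonical_trace x {Inl u} = term_prob u x"
  unfolding canonical_trace_def by simp

lemma canonical_trace_cyl:
  assumes t: "t \<in> {TOmega, TInf}" and x: "x \<in> space M"
  shows "canonical_trace x (cyl t u) = prefix_prob u x"
proof -
  have "\<not> (\<exists>w. cyl t u = {Inl w})" using cyl_neq_singleton[OF t] by blast
  then have "canonical_trace x (cyl t u) = prefix_prob (SOME v. cyl t u = cyl t v) x"
    using t unfolding canonical_trace_def by auto
  also have "\<dots> = prefix_prob u x"
    using someI_ex[of "\<lambda>v. cyl t u = cyl t v"] by (intro prefix_prob_cong_cyl[OF t x]) auto
  finally show ?thesis .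
qed

lemma trace_eqs_canonical_trace: "trace_eqs t M \<alpha> canonical_trace"
  unfolding trace_eqs_def
proof (intro ballI conjI impI allI)
  fix x assume x: "x \<in> space M"
  show "canonical_trace x {} = 0" unfolding canonical_trace_def using cyl_nonempty by force
  show "canonical_trace x {Inl []} = emeasure (\<alpha> x) {None}" by (simp add: canonical_trace_singleton)
  fix a u
  show "canonical_trace x {Inl (a # u)} = (\<integral>\<^sup>+ x'. canonical_trace x' {Inl u} \<partial>transP M \<alpha> a x)"
    by (simp add: canonical_trace_singleton)
next
  fix x assume x: "x \<in> space M" and t: "t \<in> {TOmega, TInf}"
  show "canonical_trace x (cyl t []) = 1" using canonical_trace_cyl[OF t x] by simp
  fix a u
  have "canonical_trace x (cyl t (a # u)) = prefix_prob (a # u) x" by (rule canonical_trace_cyl[OF t x])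
  also have "\<dots> = (\<integral>\<^sup>+ x'. canonical_trace x' (cyl t u) \<partial>transP M \<alpha> a x)"
    unfolding prefix_prob.simps
    by (rule nn_integral_cong) (simp add: space_transP canonical_trace_cyl[OF t])
  finally show "canonical_trace x (cyl t (a # u)) = (\<integral>\<^sup>+ x'. canonical_trace x' (cyl t u) \<partial>transP M \<alpha> a x)" .
qed

lemma trace_eqs_empty: "trace_eqs t M \<alpha> tr \<Longrightarrow> x \<in> space M \<Longrightarrow> tr x {} = 0"
  unfolding trace_eqs_def by simp

lemma trace_eqs_singleton:
  assumes tr: "trace_eqs t M \<alpha> tr" and t: "t \<in> {TStar, TInf}"
  shows "x \<in> space M \<Longrightarrow> tr x {Inl u} = term_prob u x"
proof (induction u arbitrary: x)
  case Nil
  then show ?case using tr t unfolding trace_eqs_def term_prob.simps prefix_prob.simps by blast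
next
  case (Cons a u)
  have "tr x {Inl (a # u)} = (\<integral>\<^sup>+ x'. tr x' {Inl u} \<partial>transP M \<alpha> a x)"
    using tr t Cons.prems unfolding trace_eqs_def by blast
  also have "\<dots> = term_prob (a # u) x"
    unfolding term_prob.simps by (rule nn_integral_cong) (use Cons.IH in \<open>simp add: space_transP\<close>)
  finally show ?case .
qed

lemma trace_eqs_cyl:
  assumes tr: "trace_eqs t M \<alpha> tr" and t: "t \<in> {TOmega, TInf}"
  shows "x \<in> space M \<Longrightarrow> tr x (cyl t u) = prefix_prob u x"
proof (induction u arbitrary: x)
  case Nil
  then show ?case using tr t unfolding trace_eqs_def term_prob.simps prefix_prob.simps by blast
next
  case (Cons a u)
  have "tr x (cyl t (a # u)) = (\<integral>\<^sup>+ x'. tr x' (cyl t u) \<partial>transP M \<alpha> a x)"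
    using tr t Cons.prems unfolding trace_eqs_def by blast
  also have "\<dots> = prefix_prob (a # u) x"
    unfolding prefix_prob.simps by (rule nn_integral_cong) (use Cons.IH in \<open>simp add: space_transP\<close>)
  finally show ?case .
qed

lemma trace_eqs_unique:
  assumes "trace_eqs t M \<alpha> tr" "trace_eqs t M \<alpha> tr'" "x \<in> space M" "S \<in> pts_semiring t"
  shows "tr x S = tr' x S"
  using assms(4)
  by (cases rule: pts_semiring_cases)
    (simp_all add: trace_eqs_empty trace_eqs_singleton trace_eqs_cyl assms(1-3))

lemma trace_eqs_le_1:
  assumes "trace_eqs t M \<alpha> tr" "x \<in> space M" "S \<in> pts_semiring t"
  shows "tr x S \<le> 1"
  using assms(3)
  by (cases rule: pts_semiring_cases)
    (simp_all add: trace_eqs_empty trace_eqs_singleton trace_eqs_cyl term_prob_le_1 prefix_prob_le_1 assms(1,2))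

section \<open>Countable additivity\<close>

lemma trace_eqs_sum_atoms:
  assumes tr: "trace_eqs t M \<alpha> tr" and x: "x \<in> space M" and s: "at_level t n s"
  shows "tr x s = (\<Sum>z\<in>atoms t n. if atom t z \<subseteq> s then atom_weight x z else 0)"
proof -
  from s consider (empty) "s = {}" | (single) w where "t \<in> {TStar, TInf}" "s = {Inl w}" "length w < n"
    | (cyl) w where "t \<in> {TOmega, TInf}" "s = cyl t w" "length w \<le> n"
    unfolding at_level_def by blast
  then show ?thesis
  proof cases
    case empty
    have "(\<Sum>z\<in>atoms t n. if atom t z \<subseteq> s then atom_weight x z else 0) = 0"
      by (rule sum.neutral) (use empty atom_nonempty in auto)
    then show ?thesis using empty trace_eqs_empty[OF tr x] by simp
  next
    case single
    have "atom t z \<subseteq> s \<longleftrightarrow> z = (w, True)" if z: "z \<in> atoms t n" for z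
    proof (rule atomsE[OF z])
      fix v assume "z = (v, False)" "t \<in> {TOmega, TInf}" "length v = n"
      then show ?thesis using single cyl_neq_singleton[of t v w] atom_nonempty[OF z]
        by (auto simp: atom_def subset_singleton_iff)
    qed (use single in \<open>auto simp: atom_def\<close>)
    then have "(\<Sum>z\<in>atoms t n. if atom t z \<subseteq> s then atom_weight x z else 0) =
        (\<Sum>z\<in>atoms t n. if z = (w, True) then atom_weight x z else 0)"
      by (intro sum.cong) auto
    also have "\<dots> = term_prob w x"
    proof -
      have "(w, True) \<in> atoms t n" using single by (auto simp: atoms_def)
      then show ?thesis by (simp only: sum.delta[OF finite_atoms] if_True atom_weight_simps)
    qed
    finally show ?thesis using single trace_eqs_singleton[OF tr _ x] by simp
  next
    case cyl
    then show ?thesis using trace_eqs_cyl[OF tr _ x] prefix_prob_sum_atoms[OF _ x] by simp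
  qed
qed

lemma trace_eqs_countably_additive:
  assumes tr: "trace_eqs t M \<alpha> tr" and x: "x \<in> space M"
  shows "countably_additive (pts_semiring t) (tr x)"
  unfolding countably_additive_def
proof (intro allI impI)
  fix A :: "nat \<Rightarrow> 'a word set"
  assume A: "range A \<subseteq> pts_semiring t" and dj: "disjoint_family A" and B: "(\<Union>i. A i) \<in> pts_semiring t"
  define B where "B = (\<Union>i. A i)"
  obtain n1 where n1: "\<And>i. at_level t n1 (A i)" using partition_common_level[OF A dj B_def[symmetric]] B B_def by blast
  obtain n2 where n2: "at_level t n2 B" using pts_semiring_at_level B B_def by blast
  define n where "n = max n1 n2"
  have lA: "at_level t n (A i)" for i using at_level_mono[OF n1] n_def by simp
  have lB: "at_level t n B" using at_level_mono[OF n2] n_def by simp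
  define I where "I = {i. A i \<noteq> {}}"
  have I: "finite I" unfolding I_def using finite_nonempty_at_level[OF dj lA] .
  have "(\<Sum>i. tr x (A i)) = (\<Sum>i\<in>I. tr x (A i))"
    by (rule suminf_finite[OF I]) (auto simp: I_def trace_eqs_empty[OF tr x])
  also have "\<dots> = (\<Sum>i\<in>I. \<Sum>z\<in>atoms t n. if atom t z \<subseteq> A i then atom_weight x z else 0)"
    using trace_eqs_sum_atoms[OF tr x lA] by simp
  also have "\<dots> = (\<Sum>z\<in>atoms t n. if atom t z \<subseteq> B then atom_weight x z else 0)"
    unfolding B_def by (subst sum.swap, intro sum.cong refl sum_pieces_containing_atom[OF dj lA _ I])
      (auto simp: I_def)
  also have "\<dots> = tr x B" using trace_eqs_sum_atoms[OF tr x lB] by simp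
  finally show "(\<Sum>i. tr x (A i)) = tr x (\<Union>i. A i)" unfolding B_def .
qed

section \<open>The trace measure\<close>

lemma trace_eqs_sigma_finite:
  assumes tr: "trace_eqs t M \<alpha> tr" and x: "x \<in> space M"
  shows "sigma_finite_on (words t) (pts_semiring t) (tr x)"
proof -
  have finite: "tr x S \<noteq> \<infinity>" if "S \<in> pts_semiring t" for S
    using trace_eqs_le_1[OF tr x that] by (auto simp: top_unique)
  show ?thesis
  proof (cases "t \<in> {TOmega, TInf}")
    case True
    then have c: "cyl t [] \<in> pts_semiring t" by auto
    show ?thesis unfolding sigma_finite_on_def
      using c finite[OF c] by (intro exI[of _ "\<lambda>_. cyl t []"]) (simp add: cyl_Nil)
  next
    case False
    then consider "t = T0" | "t = TStar" by (cases t) auto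
    then show ?thesis
    proof cases
      case 1
      then show ?thesis unfolding sigma_finite_on_def
        by (intro exI[of _ "\<lambda>_. {}"]) (simp add: trace_eqs_empty[OF tr x])
    next
      case 2
      define A :: "nat \<Rightarrow> 'a word set" where "A i = {Inl (from_nat i)}" for i
      have "range A \<subseteq> pts_semiring t" using 2 by (auto simp: A_def)
      moreover have "\<Union>(range A) = words t"
        using 2 by (auto simp: A_def image_iff) (metis from_nat_to_nat)
      ultimately show ?thesis using finite unfolding sigma_finite_on_def by blast
    qed
  qed
qed

definition is_trace_measure :: "('x \<Rightarrow> 'a word set \<Rightarrow> ennreal) \<Rightarrow> 'x \<Rightarrow> 'a word measure \<Rightarrow> bool" where
  "is_trace_measure tr x N \<longleftrightarrow> space N = words t \<and> sets N = sigma_sets (words t) (pts_semiring t)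
     \<and> (\<forall>S\<in>pts_semiring t. emeasure N S = tr x S)"

lemma trace_measure_unique:
  assumes tr: "trace_eqs t M \<alpha> tr" and x: "x \<in> space M"
    and N1: "is_trace_measure tr x N1" and N2: "is_trace_measure tr x N2"
  shows "N1 = N2"
proof -
  obtain A :: "nat \<Rightarrow> 'a word set"
    where A: "range A \<subseteq> pts_semiring t" "\<Union>(range A) = words t" "\<And>i. tr x (A i) \<noteq> \<infinity>"
    using trace_eqs_sigma_finite[OF tr x] unfolding sigma_finite_on_def by blast
  show ?thesis
  proof (rule measure_eqI_generator_eq[where E="pts_semiring t" and \<Omega>="words t" and A=A])
    show "Int_stable (pts_semiring t)" by (rule Int_stableI) (rule pts_semiring_Int)
    show "pts_semiring t \<subseteq> Pow (words t)" using pts_semiring_subset_words by blast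
    show "emeasure N1 (A i) \<noteq> \<infinity>" for i
    proof -
      have "A i \<in> pts_semiring t" using A(1) by auto
      then show ?thesis using N1 A(3) by (simp add: is_trace_measure_def)
    qed
  qed (use N1 N2 A in \<open>auto simp: is_trace_measure_def\<close>)
qed

lemma trace_measure_exists:
  assumes tr: "trace_eqs t M \<alpha> tr" and x: "x \<in> space M"
  shows "\<exists>N. is_trace_measure tr x N"
proof -
  let ?G = "sigma_sets (words t) (pts_semiring t :: 'a word set set)"
  interpret semiring_of_sets "words t" "pts_semiring t :: 'a word set set"
    by (rule semiring_of_sets_pts)
  have "positive (pts_semiring t) (tr x)"
    unfolding positive_def by (rule trace_eqs_empty[OF tr x])
  then obtain \<mu> where \<mu>: "\<forall>S\<in>pts_semiring t. \<mu> S = tr x S" and ms: "measure_space (words t) ?G \<mu>"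
    using caratheodory[OF _ trace_eqs_countably_additive[OF tr x]] by blast
  define N where "N = measure_of (words t) ?G \<mu>"
  have G: "?G \<subseteq> Pow (words t)"
    using sigma_sets_into_sp[of "pts_semiring t" "words t"] pts_semiring_subset_words by blast
  have "sets N = ?G"
    unfolding N_def sets_measure_of[OF G]
    using ms by (simp add: measure_space_def sigma_algebra.sigma_sets_eq)
  moreover have "space N = words t" unfolding N_def by (rule space_measure_of[OF G])
  moreover have "emeasure N S = tr x S" if "S \<in> pts_semiring t" for S
    using ms \<mu> that unfolding N_def measure_space_def
    by (simp add: emeasure_measure_of_sigma sigma_sets.Basic)
  ultimately show ?thesis unfolding is_trace_measure_def by blast
qed

lemma trace_measure_space_eq_1:
  assumes tr: "trace_eqs t M \<alpha> tr" and x: "x \<in> space M" and N: "is_trace_measure tr x N"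
    and t: "t \<in> {TOmega, TInf}"
  shows "emeasure N (space N) = 1"
proof -
  have "cyl t [] \<in> pts_semiring t" using t by auto
  then show ?thesis using N trace_eqs_cyl[OF tr t x, of "[]"] by (force simp: is_trace_measure_def cyl_Nil)
qed

lemma trace_measure_space_le_1:
  assumes tr: "trace_eqs t M \<alpha> tr" and x: "x \<in> space M" and N: "is_trace_measure tr x N"
  shows "emeasure N (space N) \<le> 1"
proof (cases "t = TStar")
  case False
  have sp: "space N = words t" using N by (simp add: is_trace_measure_def)
  consider "t = T0" | "t \<in> {TOmega, TInf}" using False by (cases t) auto
  then show ?thesis
  proof cases
    case 1
    then show ?thesis using sp by simp
  qed (simp add: trace_measure_space_eq_1[OF tr x N])
next
  case TStar: True
  have sp: "space N = words t" and sN: "sets N = sigma_sets (words t) (pts_semiring t)"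
    and em: "\<And>S. S \<in> pts_semiring t \<Longrightarrow> emeasure N S = tr x S"
    using N by (auto simp: is_trace_measure_def)
  have single: "{Inl u} \<in> sets N" for u :: "'a list" using TStar sN by (auto intro: sigma_sets.Basic)
  define B :: "nat \<Rightarrow> 'a word set" where "B k = (\<Union>u\<in>{u::'a list. length u < k}. {Inl u})" for k
  have B: "range B \<subseteq> sets N"
    unfolding B_def by (auto intro!: sets.finite_UN simp: finite_lists_shorter single)
  have "(\<Union>k. B k) = space N"
    using sp TStar by (auto simp: B_def intro: exI[of _ "Suc (length _)"])
  moreover have "incseq B" unfolding B_def incseq_def by auto
  ultimately have "emeasure N (space N) = (SUP k. emeasure N (B k))"
    using SUP_emeasure_incseq[OF B] by simp
  also have "\<dots> \<le> 1"
  proof (rule SUP_least)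
    fix k
    have "emeasure N (B k) = (\<Sum>u\<in>{u::'a list. length u < k}. emeasure N {Inl u})"
      unfolding B_def
      by (rule sum_emeasure[symmetric]) (auto simp: single disjoint_family_on_def finite_lists_shorter)
    also have "\<dots> = (\<Sum>u\<in>{u::'a list. length u < k}. term_prob u x)"
      using em trace_eqs_singleton[OF tr _ x] TStar by simp
    finally show "emeasure N (B k) \<le> 1" using sum_term_prob_le_1[OF x] by simp
  qed
  finally show ?thesis .
qed

end

theorem mainTheorem6:
  fixes t :: ptstype and M :: "'x measure" and \<alpha> :: "'x \<Rightarrow> ('a::finite \<times> 'x) option measure"
  assumes "is_pts t M \<alpha>"
  shows "(\<exists>tr. trace_eqs t M \<alpha> tr)
    \<and> (\<forall>tr tr'. trace_eqs t M \<alpha> tr \<longrightarrow> trace_eqs t M \<alpha> tr' \<longrightarrow>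
          (\<forall>x\<in>space M. \<forall>S\<in>pts_semiring t. tr x S = tr' x S))
    \<and> (\<forall>tr. trace_eqs t M \<alpha> tr \<longrightarrow> (\<forall>x\<in>space M.
          positive (pts_semiring t) (tr x)
        \<and> countably_additive (pts_semiring t) (tr x)
        \<and> (\<forall>S\<in>pts_semiring t. tr x S \<le> 1)
        \<and> sigma_finite_on (words t) (pts_semiring t) (tr x)
        \<and> (\<exists>!N. space N = words t \<and> sets N = sigma_sets (words t) (pts_semiring t)
               \<and> (\<forall>S\<in>pts_semiring t. emeasure N S = tr x S))
        \<and> (\<forall>N. space N = words t \<and> sets N = sigma_sets (words t) (pts_semiring t)
               \<and> (\<forall>S\<in>pts_semiring t. emeasure N S = tr x S) \<longrightarrow>
               emeasure N (space N) \<le> 1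
             \<and> (t \<in> {TOmega, TInf} \<longrightarrow> emeasure N (space N) = 1))))"
proof -
  interpret pts t M \<alpha> by standard (rule assms)
  have "\<exists>!N. is_trace_measure tr x N" if "trace_eqs t M \<alpha> tr" "x \<in> space M" for tr x
    using trace_measure_exists[OF that] trace_measure_unique[OF that] by blast
  then show ?thesis
    using trace_eqs_canonical_trace trace_eqs_unique trace_eqs_le_1 trace_eqs_countably_additive
      trace_eqs_sigma_finite trace_measure_space_le_1 trace_measure_space_eq_1
    by (simp add: positive_def trace_eqs_empty is_trace_measure_def) blast
qed

end
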